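(* Let $V$ be any $\mathcal{U}(\widehat{\mathfrak{sl}}_2)$-module of the form $D^{k,t}_0$ or $D^{\pm,k,t}_j$ (with $k\in\mathbb{Z}$, $k<-2$, $j\in-\tfrac12\mathbb{N}$, $t\in\mathbb{Z}$), so that the contragredient is defined for $V$ and for its spectral-flow images. Then for every $s\in\mathbb{Z}$ one has the equality of $\mathcal{U}(\widehat{\mathfrak{sl}}_2)$-modules $(V^s)^\curlyvee=(V^\curlyvee)^{-s}$ (same underlying vector space, same action).
   Context: $\widehat{\mathfrak{sl}}_2$ has generators $J^a_n$ ($a\in\{+,-,0\}$, $n\in\mathbb{Z}$), $K$, $d$ with $[J^+_m,J^-_n]=J^0_{m+n}+Km\delta_{m+n,0}$, $[J^0_m,J^\pm_n]=\pm2J^\pm_{m+n}$, $[J^0_m,J^0_n]=2Km\delta_{m+n,0}$, $[J^\pm_m,J^\pm_n]=0$, $[d,J^a_n]=nJ^a_n$, $K$ central. For $j\in-\tfrac12\mathbb{N}$, $D^\pm_j$ are the $\mathfrak{sl}_2=\mathrm{span}\{J^a_0\}$-modules with bases $\{|j,m\rangle_\pm\}_{m\ge0}$, $J^0|j,m\rangle_\pm=\pm2(m-j)|j,m\rangle_\pm$, $J^\pm|j,m\rangle_\pm=\sqrt{(m+1)(m-2j)}|j,m+1\rangle_\pm$, $J^\mp|j,m\rangle_\pm=-\sqrt{m(m-1-2j)}|j,m-1\rangle_\pm$, and $D_0=\mathbb{C}$ is trivial. With $\mathfrak{r}_+=\mathrm{span}\{J^a_n:n\ge1\}$, $\mathfrak{k}=\mathrm{span}\{J^a_0,K,d\}$,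 the prolongation at level $k$ is $V^k=\mathcal{U}(\widehat{\mathfrak{sl}}_2)\otimes_{\mathcal{U}(\mathfrak{k}\oplus\mathfrak{r}_+)}V^{(k)}$, with $K=k$, $\mathfrak{r}_+=0$ and $d$ acting by $-\frac{j(j+1)}{k+2}$ (resp. $0$ for $D_0$) on $V^{(k)}=V$. The spectral flow automorphism $\vartheta_s$ is $J^\pm_n\mapsto J^\pm_{n\mp s}$, $J^0_n\mapsto J^0_n-sK\delta_{n,0}$, $K\mapsto K$, $d\mapsto d+\frac s2J^0_0-\frac{s^2}4K$, and $W^s=(W,\rho\circ\vartheta_s)$ for a module $(W,\rho)$. $D^{\pm,k,t}_j=((D^\pm_j)^k)^t$, $D^{k,t}_0=((D_0)^k)^t$. For such a module $V$, with distinguished cyclic vector $v_0=1\otimes|j,0\rangle_\pm$ (resp. $1\otimes1$) having $d$- and $J^0_0$-eigenvalues $\delta_0,q_0$, put $V_{m,n}=\{v:dv=(\delta_0-m)v,\ J^0_0v=(q_0+2n)v\}$; the contragredient is $V^\curlyvee=\bigoplus_{m,n}V_{m,n}^*$ with $(J^a_n\varphi)(v)=-\varphi(J^a_{-n}v)$, $(K\varphi)(v)=\varphi(Kv)$, $(d\varphi)(v)=\varphi(dv)$. (The subspaces $V_{m,n}$ of $V$ and of $V^s$ coincide as subspaces of the common underlying vector space.) *)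

theory Defs
  imports Complex_Main
begin

text \<open>Index a of J^a_n: Pl = +, Mi = -, Ze = 0.\<close>
datatype sgn = Pl | Mi | Ze

text \<open>Basis of the affine algebra: J^a_n, the central element K, and d.\<close>
datatype gen = J sgn int | Kc | Dc

fun brk :: "gen \<Rightarrow> gen \<Rightarrow> (complex \<times> gen) list" where
  "brk (J Pl m) (J Mi n) = [(1, J Ze (m+n))] @ (if m+n = 0 then [(of_int m, Kc)] else [])"
| "brk (J Mi n) (J Pl m) = [(-1, J Ze (m+n))] @ (if m+n = 0 then [(- of_int m, Kc)] else [])"
| "brk (J Ze m) (J Pl n) = [(2, J Pl (m+n))]"
| "brk (J Ze m) (J Mi n) = [(-2, J Mi (m+n))]"
| "brk (J Pl n) (J Ze m) = [(-2, J Pl (m+n))]"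
| "brk (J Mi n) (J Ze m) = [(2, J Mi (m+n))]"
| "brk (J Ze m) (J Ze n) = (if m+n = 0 then [(2 * of_int m, Kc)] else [])"
| "brk Dc (J a n) = [(of_int n, J a n)]"
| "brk (J a n) Dc = [(- of_int n, J a n)]"
| "brk _ _ = []"

record 'v umod =
  car  :: "'v set"
  addv :: "'v \<Rightarrow> 'v \<Rightarrow> 'v"
  scal :: "complex \<Rightarrow> 'v \<Rightarrow> 'v"
  act  :: "gen \<Rightarrow> 'v \<Rightarrow> 'v"

definition mod_eq :: "'v umod \<Rightarrow> 'v umod \<Rightarrow> bool" where
  "mod_eq A B \<longleftrightarrow> car A = car B
     \<and> (\<forall>x\<in>car A. \<forall>y\<in>car A. addv A x y = addv B x y)
     \<and> (\<forall>c. \<forall>x\<in>car A. scal A c x = scal B c x)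
     \<and> (\<forall>g. \<forall>x\<in>car A. act A g x = act B g x)"

text \<open>Free vector space on pairs (word in the generators, basis vector of V); words act by
  left concatenation, so the word [x1,...,xr] stands for x1 \<cdots> xr \<otimes> b.\<close>
type_synonym 'b fv = "gen list \<times> 'b \<Rightarrow> complex"

definition FV :: "'b fv set" where
  "FV = {f. finite {p. f p \<noteq> 0}}"

definition ev :: "gen list \<Rightarrow> 'b \<Rightarrow> 'b fv" where
  "ev w b = (\<lambda>p. if p = (w, b) then 1 else 0)"

definition lincomb :: "(complex \<times> 'c) list \<Rightarrow> ('c \<Rightarrow> 'b fv) \<Rightarrow> 'b fv" where
  "lincomb L f = (\<lambda>p. sum_list (map (\<lambda>(c, z). c * f z p) L))"

text \<open>Generating relations: Lie relations of U(g) (inside words), and the right action of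
  the parabolic k + r_+ : J^a_0 acts on V by the sl2-action act0, K by k, d by delta, r_+ by 0.\<close>
definition rels :: "(sgn \<Rightarrow> 'b \<Rightarrow> (complex \<times> 'b) list) \<Rightarrow> complex \<Rightarrow> int \<Rightarrow> 'b fv set" where
  "rels act0 \<delta> k =
     {(\<lambda>p. ev (w @ [x, y] @ w') b p - ev (w @ [y, x] @ w') b p
            - lincomb (brk x y) (\<lambda>z. ev (w @ [z] @ w') b) p) | w x y w' b. True}
   \<union> {(\<lambda>p. ev (w @ [J a 0]) b p - lincomb (act0 a b) (\<lambda>b'. ev w b') p) | w a b. True}
   \<union> {(\<lambda>p. ev (w @ [Kc]) b p - of_int k * ev w b p) | w b. True}
   \<union> {(\<lambda>p. ev (w @ [Dc]) b p - \<delta> * ev w b p) | w b. True}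
   \<union> {ev (w @ [J a n]) b | w a n b. n \<ge> 1}"

inductive_set spanR :: "'b fv set \<Rightarrow> 'b fv set" for R where
  zero: "(\<lambda>p. 0) \<in> spanR R"
| step: "r \<in> R \<Longrightarrow> n \<in> spanR R \<Longrightarrow> (\<lambda>p. c * r p + n p) \<in> spanR R"

definition qcls :: "'b fv set \<Rightarrow> 'b fv \<Rightarrow> 'b fv set" where
  "qcls N f = {g \<in> FV. (\<lambda>p. f p - g p) \<in> N}"

definition rep :: "'b fv set \<Rightarrow> 'b fv" where
  "rep C = (SOME f. f \<in> C)"

text \<open>Left multiplication by a generator.\<close>
definition prep :: "gen \<Rightarrow> 'b fv \<Rightarrow> 'b fv" where
  "prep x f = (\<lambda>(w, b). case w of [] \<Rightarrow> 0 | y # w' \<Rightarrow> if y = x then f (w', b) else 0)"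

text \<open>The prolongation U(g) \<otimes>_{U(k + r_+)} V at level k, where d acts on V by delta.\<close>
definition indmod :: "(sgn \<Rightarrow> 'b \<Rightarrow> (complex \<times> 'b) list) \<Rightarrow> complex \<Rightarrow> int \<Rightarrow> 'b fv set umod" where
  "indmod act0 \<delta> k =
    (let N = spanR (rels act0 \<delta> k) in
     \<lparr> car = {qcls N f | f. f \<in> FV},
       addv = (\<lambda>C D. qcls N (\<lambda>p. rep C p + rep D p)),
       scal = (\<lambda>c C. qcls N (\<lambda>p. c * rep C p)),
       act = (\<lambda>x C. qcls N (prep x (rep C))) \<rparr>)"

definition flow :: "int \<Rightarrow> 'v umod \<Rightarrow> 'v umod" where
  "flow s W = W\<lparr> act := (\<lambda>x v. case x of
       J Pl n \<Rightarrow> act W (J Pl (n - s)) v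
     | J Mi n \<Rightarrow> act W (J Mi (n + s)) v
     | J Ze n \<Rightarrow> (if n = 0 then addv W (act W (J Ze 0) v) (scal W (- of_int s) (act W Kc v))
                  else act W (J Ze n) v)
     | Kc \<Rightarrow> act W Kc v
     | Dc \<Rightarrow> addv W (act W Dc v)
               (addv W (scal W (of_int s / 2) (act W (J Ze 0) v))
                       (scal W (- ((of_int s)^2) / 4) (act W Kc v)))) \<rparr>"

text \<open>V_{m,n} for a module with distinguished-vector eigenvalues par = (delta0, q0).\<close>
definition wsp :: "'v umod \<Rightarrow> complex \<times> complex \<Rightarrow> int \<Rightarrow> int \<Rightarrow> 'v set" where
  "wsp W par m n = {v \<in> car W. act W Dc v = scal W (fst par - of_int m) v
                              \<and> act W (J Ze 0) v = scal W (snd par + 2 * of_int n) v}"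

text \<open>The restricted dual, realised inside the algebraic dual: linear functionals on V
  (extended by 0 off the carrier) vanishing on all but finitely many V_{m,n}.\<close>
definition contra :: "'v umod \<Rightarrow> complex \<times> complex \<Rightarrow> ('v \<Rightarrow> complex) umod" where
  "contra W par =
    \<lparr> car = {\<phi>. (\<forall>v. v \<notin> car W \<longrightarrow> \<phi> v = 0)
               \<and> (\<forall>u\<in>car W. \<forall>v\<in>car W. \<phi> (addv W u v) = \<phi> u + \<phi> v)
               \<and> (\<forall>c. \<forall>v\<in>car W. \<phi> (scal W c v) = c * \<phi> v)
               \<and> finite {(m, n). \<exists>v\<in>wsp W par m n. \<phi> v \<noteq> 0}},
      addv = (\<lambda>\<phi> \<psi> v. \<phi> v + \<psi> v),
      scal = (\<lambda>c \<phi> v. c * \<phi> v),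
      act = (\<lambda>x \<phi> v. if v \<in> car W then
               (case x of J a n \<Rightarrow> - \<phi> (act W (J a (- n)) v)
                        | Kc \<Rightarrow> \<phi> (act W Kc v)
                        | Dc \<Rightarrow> \<phi> (act W Dc v))
             else 0) \<rparr>"

text \<open>j = - jj/2 with jj a natural number. sigma = True is D^+, False is D^-.
  act0 gives J^a |j,m> as a list of (coefficient, basis index).\<close>
definition act0_pm :: "bool \<Rightarrow> nat \<Rightarrow> sgn \<Rightarrow> nat \<Rightarrow> (complex \<times> nat) list" where
  "act0_pm \<sigma> jj a m =
     (if a = Ze then [((if \<sigma> then 2 else -2) * (of_nat m + of_nat jj / 2), m)]
      else if a = (if \<sigma> then Pl else Mi)
        then [(complex_of_real (sqrt (real ((m + 1) * (m + jj)))), m + 1)]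
      else (if m = 0 then [] else [(- complex_of_real (sqrt (real (m * (m - 1 + jj)))), m - 1)]))"

definition jval :: "nat \<Rightarrow> complex" where
  "jval jj = - of_nat jj / 2"

definition delta_pm :: "int \<Rightarrow> nat \<Rightarrow> complex" where
  "delta_pm k jj = - (jval jj * (jval jj + 1)) / (of_int k + 2)"

text \<open>Eigenvalues (delta0,q0) after spectral flow by t of a vector with eigenvalues par.\<close>
definition fpar :: "int \<Rightarrow> int \<Rightarrow> complex \<times> complex \<Rightarrow> complex \<times> complex" where
  "fpar k t par = (fst par + of_int t / 2 * snd par - (of_int t)^2 * of_int k / 4,
                   snd par - of_int t * of_int k)"

definition Dpm :: "bool \<Rightarrow> int \<Rightarrow> nat \<Rightarrow> int \<Rightarrow> nat fv set umod" where
  "Dpm \<sigma> k jj t = flow t (indmod (act0_pm \<sigma> jj) (delta_pm k jj) k)"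

definition par_pm :: "bool \<Rightarrow> int \<Rightarrow> nat \<Rightarrow> int \<Rightarrow> complex \<times> complex" where
  "par_pm \<sigma> k jj t = fpar k t (delta_pm k jj, (if \<sigma> then -2 else 2) * jval jj)"

definition D0 :: "int \<Rightarrow> int \<Rightarrow> unit fv set umod" where
  "D0 k t = flow t (indmod (\<lambda>_ _. []) 0 k)"

definition par0 :: "int \<Rightarrow> int \<Rightarrow> complex \<times> complex" where
  "par0 k t = fpar k t (0, 0)"

end

theory Submission
  imports Defs
begin

text \<open>Spectral flow only adds multiples of \<open>K\<close> and \<open>J\<^sup>0\<^sub>0\<close> to \<open>J\<^sup>0\<^sub>0\<close> and \<open>d\<close>. On a module on which
  \<open>K\<close> acts by the level \<open>k\<close>, the weight space \<open>V\<^sub>m\<^sub>,\<^sub>n\<close> of \<open>V\<^sup>s\<close> (taken with the flowed distinguished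
  eigenvalues) is therefore the weight space \<open>V\<^bsub>m+sn,n\<^esub>\<close> of \<open>V\<close>. This shear of the weight lattice
  preserves finiteness of supports, so \<open>(V\<^sup>s)\<^sup>\<curlyvee>\<close> and \<open>V\<^sup>\<curlyvee>\<close> consist of the same functionals. On
  them the contragredient lets \<open>x\<close> act as the transpose of \<open>-\<vartheta>\<^sub>s(x')\<close>, where \<open>x'\<close> is \<open>J\<^sup>a\<^bsub>-n\<^esub>\<close> for
  \<open>x = J\<^sup>a\<^sub>n\<close> and \<open>-K\<close>, \<open>-d\<close> otherwise. This reverses the mode shifts of \<open>\<vartheta>\<^sub>s\<close> and the signs of
  its corrections linear in \<open>s\<close> (the \<open>K\<close>-term of \<open>J\<^sup>0\<^sub>0\<close> and the \<open>J\<^sup>0\<^sub>0\<close>-term of \<open>d\<close>), turning it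
  into \<open>\<vartheta>\<^bsub>-s\<^esub>\<close>. The only property of the prolongations needed is that \<open>K\<close> acts by
  \<open>k\<close>, which holds because \<open>K\<close> commutes with every word in the generators.\<close>

text \<open>Only the fragment of the module axioms used below; the quotient construction \<open>indmod\<close>
  satisfies it without the full vector space laws having to be established.\<close>
definition level_module :: "'v umod \<Rightarrow> complex \<Rightarrow> bool" where
  "level_module W \<kappa> \<longleftrightarrow>
     (\<forall>x\<in>car W. \<forall>y\<in>car W. addv W x y \<in> car W)
   \<and> (\<forall>c. \<forall>x\<in>car W. scal W c x \<in> car W)
   \<and> (\<forall>g. \<forall>x\<in>car W. act W g x \<in> car W)
   \<and> (\<forall>a b. \<forall>v\<in>car W. scal W a (scal W b v) = scal W (a * b) v)
   \<and> (\<forall>a b. \<forall>v\<in>car W. addv W (scal W a v) (scal W b v) = scal W (a + b) v)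
   \<and> (\<forall>u\<in>car W. \<forall>v\<in>car W. \<forall>a c. addv W u (scal W c v) = scal W a v \<longrightarrow> u = scal W (a - c) v)
   \<and> (\<forall>v\<in>car W. act W Kc v = scal W \<kappa> v)"

lemma flow_simps [simp]:
  "car (flow s W) = car W" "addv (flow s W) = addv W" "scal (flow s W) = scal W"
  "act (flow s W) Kc v = act W Kc v"
  "act (flow s W) (J Pl n) v = act W (J Pl (n - s)) v"
  "act (flow s W) (J Mi n) v = act W (J Mi (n + s)) v"
  "act (flow s W) (J Ze 0) v = addv W (act W (J Ze 0) v) (scal W (- of_int s) (act W Kc v))"
  "n \<noteq> 0 \<Longrightarrow> act (flow s W) (J Ze n) v = act W (J Ze n) v"
  "act (flow s W) Dc v = addv W (act W Dc v)
     (addv W (scal W (of_int s / 2) (act W (J Ze 0) v)) (scal W (- ((of_int s)^2) / 4) (act W Kc v)))"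
  by (simp_all add: flow_def)

lemma level_module_flow:
  assumes "level_module W \<kappa>"
  shows "level_module (flow s W) \<kappa>"
proof -
  have "act (flow s W) g x \<in> car W" if "x \<in> car W" for g x
    using assms that unfolding level_module_def
    by (auto simp: flow_def split: gen.split sgn.split)
  then show ?thesis
    using assms unfolding level_module_def by simp
qed

lemma add_scal_eq_scal_iff:
  assumes "level_module W \<kappa>" "u \<in> car W" "v \<in> car W"
  shows "addv W u (scal W c v) = scal W a v \<longleftrightarrow> u = scal W (a - c) v"
  using assms unfolding level_module_def by (metis diff_add_cancel)

lemma flow_J0_eigen_iff:
  assumes W: "level_module W \<kappa>" and v: "v \<in> car W"
  shows "act (flow s W) (J Ze 0) v = scal W q v \<longleftrightarrow> act W (J Ze 0) v = scal W (q + of_int s * \<kappa>) v"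
proof -
  have "act (flow s W) (J Ze 0) v = addv W (act W (J Ze 0) v) (scal W (- of_int s * \<kappa>) v)"
    using W v unfolding level_module_def by simp
  moreover have "act W (J Ze 0) v \<in> car W"
    using W v unfolding level_module_def by blast
  ultimately show ?thesis
    using add_scal_eq_scal_iff[OF W _ v] by simp
qed

lemma flow_d_eigen_iff:
  assumes W: "level_module W \<kappa>" and v: "v \<in> car W"
    and J0: "act W (J Ze 0) v = scal W q v"
  shows "act (flow s W) Dc v = scal W \<delta> v \<longleftrightarrow>
         act W Dc v = scal W (\<delta> - (of_int s / 2 * q - (of_int s)^2 / 4 * \<kappa>)) v"
proof -
  have "act (flow s W) Dc v = addv W (act W Dc v) (scal W (of_int s / 2 * q - (of_int s)^2 / 4 * \<kappa>) v)"
    using W v J0 unfolding level_module_def by simp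
  moreover have "act W Dc v \<in> car W"
    using W v unfolding level_module_def by blast
  ultimately show ?thesis
    using add_scal_eq_scal_iff[OF W _ v] by simp
qed

lemma wsp_flow:
  assumes W: "level_module W (of_int k)"
  shows "wsp (flow s W) (fpar k s par) m n = wsp W par (m + s * n) n"
proof -
  obtain \<delta> q where par: "par = (\<delta>, q)" by (cases par)
  have "v \<in> wsp (flow s W) (fpar k s par) m n \<longleftrightarrow> v \<in> wsp W par (m + s * n) n"
    if v: "v \<in> car W" for v
  proof -
    let ?q = "q + 2 * of_int n"
    have J0: "act (flow s W) (J Ze 0) v = scal W (q - of_int s * of_int k + 2 * of_int n) v
              \<longleftrightarrow> act W (J Ze 0) v = scal W ?q v"
      using flow_J0_eigen_iff[OF W v] by (simp add: algebra_simps)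
    have "\<delta> + of_int s / 2 * q - (of_int s)^2 * of_int k / 4 - of_int m
            - (of_int s / 2 * ?q - (of_int s)^2 / 4 * of_int k) = \<delta> - of_int (m + s * n)"
      by (simp add: field_simps)
    then have "act W (J Ze 0) v = scal W ?q v \<Longrightarrow>
          act (flow s W) Dc v = scal W (\<delta> + of_int s / 2 * q - (of_int s)^2 * of_int k / 4 - of_int m) v
          \<longleftrightarrow> act W Dc v = scal W (\<delta> - of_int (m + s * n)) v"
      using flow_d_eigen_iff[OF W v] by metis
    then show ?thesis
      using J0 v by (auto simp: wsp_def fpar_def par)
  qed
  then show ?thesis
    by (auto simp: wsp_def)
qed

lemma finite_shear_iff:
  fixes s :: int
  shows "finite {(m, n). P (m + s * n) n} \<longleftrightarrow> finite {(m, n). P m n}"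
proof -
  have "{(m, n). P (m + s * n) n} = (\<lambda>(m, n). (m - s * n, n)) ` {(m, n). P m n}"
    by (auto simp: image_iff intro!: exI[where x="_ + s * _"])
  moreover have "inj_on (\<lambda>(m, n). (m - s * n, n)) X" for X :: "(int \<times> int) set"
    by (auto simp: inj_on_def)
  ultimately show ?thesis
    by (simp add: finite_image_iff)
qed

lemma car_contra_flow:
  assumes "level_module W (of_int k)"
  shows "car (contra (flow s W) (fpar k s par)) = car (contra W par)"
proof -
  have "finite {(m, n). \<exists>v\<in>wsp W par (m + s * n) n. \<phi> v \<noteq> 0}
        \<longleftrightarrow> finite {(m, n). \<exists>v\<in>wsp W par m n. \<phi> v \<noteq> 0}" for \<phi> :: "'a \<Rightarrow> complex"
    by (rule finite_shear_iff)
  then show ?thesis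
    by (simp add: contra_def wsp_flow[OF assms])
qed

lemma contra_flow:
  assumes W: "level_module W (of_int k)"
  shows "mod_eq (contra (flow s W) (fpar k s par)) (flow (- s) (contra W par))"
proof -
  have closed: "\<And>g v. v \<in> car W \<Longrightarrow> act W g v \<in> car W"
    "\<And>c v. v \<in> car W \<Longrightarrow> scal W c v \<in> car W"
    "\<And>u v. u \<in> car W \<Longrightarrow> v \<in> car W \<Longrightarrow> addv W u v \<in> car W"
    using W unfolding level_module_def by blast+
  have "act (contra (flow s W) (fpar k s par)) x \<phi> v = act (flow (- s) (contra W par)) x \<phi> v"
    if "\<phi> \<in> car (contra W par)" for x \<phi> v
  proof -
    have "\<phi> (addv W u w) = \<phi> u + \<phi> w" "\<phi> (scal W c w) = c * \<phi> w"
      if "u \<in> car W" "w \<in> car W" for u w c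
      using \<open>\<phi> \<in> car (contra W par)\<close> that by (auto simp: contra_def)
    then show ?thesis
      by (auto simp: contra_def flow_def closed power2_eq_square algebra_simps
          split: gen.split sgn.split)
  qed
  then show ?thesis
    unfolding mod_eq_def car_contra_flow[OF W] by (simp add: contra_def flow_def)
qed

lemma spanR_lincomb:
  assumes "x \<in> spanR R" "y \<in> spanR R"
  shows "(\<lambda>p. a * x p + y p) \<in> spanR R"
  using assms(1)
proof (induction x)
  case zero
  then show ?case using assms(2) by simp
next
  case (step r n c)
  have "(\<lambda>p. (a * c) * r p + (a * n p + y p)) \<in> spanR R"
    using spanR.step[OF step.hyps(1) step.IH] by simp
  then show ?case
    by (simp add: algebra_simps)
qed

lemma spanR_comb:
  assumes "x \<in> spanR R" "y \<in> spanR R" "\<And>p. z p = a * x p + b * y p"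
  shows "z \<in> spanR R"
proof -
  have "(\<lambda>p. a * x p + (b * y p + 0)) \<in> spanR R"
    using spanR_lincomb[OF assms(1) spanR_lincomb[OF assms(2) spanR.zero]] by simp
  moreover have "z = (\<lambda>p. a * x p + (b * y p + 0))"
    using assms(3) by (simp add: fun_eq_iff)
  ultimately show ?thesis
    by simp
qed

lemma spanR_base: "r \<in> R \<Longrightarrow> r \<in> spanR R"
  using spanR.step[OF _ spanR.zero, of r R 1] by simp

lemma spanR_zeroI: "(\<And>p. z p = 0) \<Longrightarrow> z \<in> spanR R"
  using spanR.zero by (metis ext)

lemma FV_lincomb: "f \<in> FV \<Longrightarrow> g \<in> FV \<Longrightarrow> (\<lambda>p. a * f p + b * g p) \<in> FV"
  unfolding FV_def mem_Collect_eq
  by (rule finite_subset[of _ "{p. f p \<noteq> 0} \<union> {p. g p \<noteq> 0}"]) auto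

lemma FV_add: "f \<in> FV \<Longrightarrow> g \<in> FV \<Longrightarrow> (\<lambda>p. f p + g p) \<in> FV"
  using FV_lincomb[of f g 1 1] by simp

lemma FV_scal: "f \<in> FV \<Longrightarrow> (\<lambda>p. c * f p) \<in> FV"
  using FV_lincomb[of f f c 0] by simp

lemma FV_prep: "f \<in> FV \<Longrightarrow> prep x f \<in> FV"
proof -
  assume f: "f \<in> FV"
  have "{p. prep x f p \<noteq> 0} \<subseteq> (\<lambda>(w, b). (x # w, b)) ` {p. f p \<noteq> 0}"
    by (force simp: prep_def split: list.splits if_splits)
  moreover have "finite ((\<lambda>(w, b). (x # w, b)) ` {p. f p \<noteq> 0})"
    using f by (simp add: FV_def)
  ultimately show ?thesis
    unfolding FV_def mem_Collect_eq by (rule finite_subset)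
qed

lemma FV_induct [consumes 1, case_names zero step]:
  assumes "f \<in> FV"
    and zero: "Q (\<lambda>p. 0)"
    and step: "\<And>c w b g. Q g \<Longrightarrow> Q (\<lambda>p. c * ev w b p + g p)"
  shows "Q f"
proof -
  have "finite {p. f p \<noteq> 0}" using assms(1) by (simp add: FV_def)
  then show ?thesis
  proof (induction "{p. f p \<noteq> 0}" arbitrary: f rule: finite_induct)
    case empty
    then have "f = (\<lambda>p. 0)" by auto
    then show ?case using zero by simp
  next
    case (insert q S)
    have "Q (f(q := 0))"
      using insert.hyps(2,4) by (intro insert.hyps(3)) auto
    then have "Q (\<lambda>p. f q * ev (fst q) (snd q) p + (f(q := 0)) p)"
      by (rule step)
    moreover have "(\<lambda>p. f q * ev (fst q) (snd q) p + (f(q := 0)) p) = f"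
      by (auto simp: ev_def fun_eq_iff)
    ultimately show ?case by simp
  qed
qed

lemma qcls_self: "f \<in> FV \<Longrightarrow> f \<in> qcls (spanR R) f"
  unfolding qcls_def by (auto intro: spanR_zeroI)

lemma qcls_eqI:
  assumes "f \<in> FV" "g \<in> FV" "(\<lambda>p. f p - g p) \<in> spanR R"
  shows "qcls (spanR R) f = qcls (spanR R) g"
  unfolding qcls_def
proof (intro Collect_cong conj_cong refl iffI)
  fix h
  assume "(\<lambda>p. f p - h p) \<in> spanR R"
  then show "(\<lambda>p. g p - h p) \<in> spanR R"
    by (rule spanR_comb[OF _ assms(3), where a=1 and b="-1"]) simp
next
  fix h
  assume "(\<lambda>p. g p - h p) \<in> spanR R"
  then show "(\<lambda>p. f p - h p) \<in> spanR R"
    by (rule spanR_comb[OF _ assms(3), where a=1 and b=1]) simp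
qed

lemma qcls_eqD:
  assumes "f \<in> FV" "qcls (spanR R) f = qcls (spanR R) g"
  shows "(\<lambda>p. f p - g p) \<in> spanR R"
proof -
  have "f \<in> qcls (spanR R) g"
    using qcls_self[OF assms(1), of R] assms(2) by simp
  then have "(\<lambda>p. g p - f p) \<in> spanR R"
    by (simp add: qcls_def)
  then show ?thesis
    by (rule spanR_comb[OF _ spanR.zero, where a="-1" and b=0]) simp
qed

lemma rep_qcls:
  assumes "f \<in> FV"
  shows "rep (qcls (spanR R) f) \<in> FV" "(\<lambda>p. rep (qcls (spanR R) f) p - f p) \<in> spanR R"
proof -
  have "rep (qcls (spanR R) f) \<in> qcls (spanR R) f"
    unfolding rep_def using qcls_self[OF assms, of R] by (metis someI)
  then have "rep (qcls (spanR R) f) \<in> FV" "(\<lambda>p. f p - rep (qcls (spanR R) f) p) \<in> spanR R"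
    by (auto simp: qcls_def)
  then show "rep (qcls (spanR R) f) \<in> FV" "(\<lambda>p. rep (qcls (spanR R) f) p - f p) \<in> spanR R"
    by (auto intro: spanR_comb[OF _ spanR.zero, where a="-1" and b=0])
qed

lemma prep_comb: "prep x (\<lambda>p. c * f p + g p) = (\<lambda>p. c * prep x f p + prep x g p)"
  by (auto simp: prep_def fun_eq_iff split: list.split)

lemma prep_zero: "prep x (\<lambda>p. 0) = (\<lambda>p. 0)"
  by (auto simp: prep_def fun_eq_iff split: list.split)

lemma prep_ev: "prep x (ev w b) = ev (x # w) b"
  by (auto simp: prep_def ev_def fun_eq_iff split: list.split)

lemma brk_Kc: "brk Kc y = []"
  by (cases y) simp_all

lemma K_commute_word:
  "(\<lambda>p. ev (u @ [Kc] @ w) b p - ev (u @ w @ [Kc]) b p) \<in> spanR (rels a \<delta> k)"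
proof (induction w arbitrary: u)
  case Nil
  then show ?case by (intro spanR_zeroI) simp
next
  case (Cons y w)
  have "(\<lambda>p. ev (u @ [Kc, y] @ w) b p - ev (u @ [y, Kc] @ w) b p
          - lincomb (brk Kc y) (\<lambda>z. ev (u @ [z] @ w) b) p) \<in> spanR (rels a \<delta> k)"
    by (rule spanR_base) (unfold rels_def, blast)
  then have "(\<lambda>p. ev (u @ [Kc, y] @ w) b p - ev (u @ [y, Kc] @ w) b p) \<in> spanR (rels a \<delta> k)"
    by (simp add: brk_Kc lincomb_def)
  then show ?case
    by (rule spanR_comb[OF _ Cons[of "u @ [y]"], where a=1 and b=1]) simp
qed

lemma K_ev: "(\<lambda>p. prep Kc (ev w b) p - of_int k * ev w b p) \<in> spanR (rels a \<delta> k)"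
proof -
  have "(\<lambda>p. ev (w @ [Kc]) b p - of_int k * ev w b p) \<in> spanR (rels a \<delta> k)"
    by (rule spanR_base) (unfold rels_def, blast)
  then show ?thesis
    by (rule spanR_comb[OF K_commute_word[of "[]" w b a \<delta> k], where a=1 and b=1])
      (simp add: prep_ev)
qed

lemma K_FV:
  assumes "f \<in> FV"
  shows "(\<lambda>p. prep Kc f p - of_int k * f p) \<in> spanR (rels a \<delta> k)"
  using assms
proof (induction rule: FV_induct)
  case zero
  show ?case by (intro spanR_zeroI) (simp add: prep_zero)
next
  case (step c w b g)
  show ?case
    by (rule spanR_comb[OF K_ev[of w b k a \<delta>] step, where a=c and b=1])
      (simp only: prep_comb, simp add: algebra_simps)
qed

lemma indmod_simps:
  "car (indmod a \<delta> k) = {qcls (spanR (rels a \<delta> k)) f | f. f \<in> FV}"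
  "addv (indmod a \<delta> k) C D = qcls (spanR (rels a \<delta> k)) (\<lambda>p. rep C p + rep D p)"
  "scal (indmod a \<delta> k) c C = qcls (spanR (rels a \<delta> k)) (\<lambda>p. c * rep C p)"
  "act (indmod a \<delta> k) x C = qcls (spanR (rels a \<delta> k)) (prep x (rep C))"
  by (simp_all add: indmod_def Let_def)

lemma car_indmod_rep:
  assumes "C \<in> car (indmod a \<delta> k)"
  shows "rep C \<in> FV" "qcls (spanR (rels a \<delta> k)) (rep C) = C"
proof -
  obtain f where f: "f \<in> FV" and C: "C = qcls (spanR (rels a \<delta> k)) f"
    using assms by (auto simp: indmod_simps)
  show "rep C \<in> FV"
    using rep_qcls(1)[OF f] C by simp
  show "qcls (spanR (rels a \<delta> k)) (rep C) = C"
    using qcls_eqI[OF rep_qcls(1)[OF f] f rep_qcls(2)[OF f]] C by simp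
qed

lemma qcls_in_car_indmod: "f \<in> FV \<Longrightarrow> qcls (spanR (rels a \<delta> k)) f \<in> car (indmod a \<delta> k)"
  by (auto simp: indmod_simps)

lemma indmod_closed:
  assumes "u \<in> car (indmod a \<delta> k)" "v \<in> car (indmod a \<delta> k)"
  shows "addv (indmod a \<delta> k) u v \<in> car (indmod a \<delta> k)"
    "scal (indmod a \<delta> k) c v \<in> car (indmod a \<delta> k)"
    "act (indmod a \<delta> k) x v \<in> car (indmod a \<delta> k)"
  using assms
  by (auto simp: indmod_simps(2-4) intro!: qcls_in_car_indmod FV_add FV_scal FV_prep car_indmod_rep)

lemma indmod_scal_scal:
  assumes "v \<in> car (indmod a \<delta> k)"
  shows "scal (indmod a \<delta> k) x (scal (indmod a \<delta> k) y v) = scal (indmod a \<delta> k) (x * y) v"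
proof -
  have f: "rep v \<in> FV" by (rule car_indmod_rep[OF assms])
  have yf: "(\<lambda>p. y * rep v p) \<in> FV" by (rule FV_scal[OF f])
  show ?thesis
    unfolding indmod_simps(3)
    by (rule qcls_eqI[OF FV_scal[OF rep_qcls(1)[OF yf]] FV_scal[OF f]],
        rule spanR_comb[OF rep_qcls(2)[OF yf] spanR.zero, where a=x and b=0])
      (simp add: algebra_simps)
qed

lemma indmod_add_scal:
  assumes "v \<in> car (indmod a \<delta> k)"
  shows "addv (indmod a \<delta> k) (scal (indmod a \<delta> k) x v) (scal (indmod a \<delta> k) y v)
       = scal (indmod a \<delta> k) (x + y) v"
proof -
  have f: "rep v \<in> FV" by (rule car_indmod_rep[OF assms])
  have xf: "(\<lambda>p. x * rep v p) \<in> FV" by (rule FV_scal[OF f])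
  have yf: "(\<lambda>p. y * rep v p) \<in> FV" by (rule FV_scal[OF f])
  show ?thesis
    unfolding indmod_simps(2,3)
    by (rule qcls_eqI[OF FV_add[OF rep_qcls(1)[OF xf] rep_qcls(1)[OF yf]] FV_scal[OF f]],
        rule spanR_comb[OF rep_qcls(2)[OF xf] rep_qcls(2)[OF yf], where a=1 and b=1])
      (simp add: algebra_simps)
qed

lemma indmod_add_scal_cancel:
  assumes u: "u \<in> car (indmod a \<delta> k)" and v: "v \<in> car (indmod a \<delta> k)"
    and eq: "addv (indmod a \<delta> k) u (scal (indmod a \<delta> k) c v) = scal (indmod a \<delta> k) x v"
  shows "u = scal (indmod a \<delta> k) (x - c) v"
proof -
  let ?N = "spanR (rels a \<delta> k)"
  have f: "rep u \<in> FV" by (rule car_indmod_rep[OF u])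
  have g: "rep v \<in> FV" by (rule car_indmod_rep[OF v])
  have cg: "(\<lambda>p. c * rep v p) \<in> FV" by (rule FV_scal[OF g])
  let ?h = "rep (qcls ?N (\<lambda>p. c * rep v p))"
  have "qcls ?N (\<lambda>p. rep u p + ?h p) = qcls ?N (\<lambda>p. x * rep v p)"
    using eq unfolding indmod_simps(2,3) .
  then have "(\<lambda>p. (rep u p + ?h p) - x * rep v p) \<in> ?N"
    by (rule qcls_eqD[OF FV_add[OF f rep_qcls(1)[OF cg]]])
  then have "qcls ?N (rep u) = qcls ?N (\<lambda>p. (x - c) * rep v p)"
    by (intro qcls_eqI[OF f FV_scal[OF g]],
        rule spanR_comb[OF _ rep_qcls(2)[OF cg], where a=1 and b="-1"])
      (simp add: algebra_simps)
  then show ?thesis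
    unfolding indmod_simps(3) car_indmod_rep(2)[OF u] .
qed

lemma level_module_indmod: "level_module (indmod a \<delta> k) (of_int k)"
proof -
  have K: "act (indmod a \<delta> k) Kc v = scal (indmod a \<delta> k) (of_int k) v"
    if "v \<in> car (indmod a \<delta> k)" for v
  proof -
    have f: "rep v \<in> FV" by (rule car_indmod_rep[OF that])
    show ?thesis
      unfolding indmod_simps(3,4) by (rule qcls_eqI[OF FV_prep[OF f] FV_scal[OF f] K_FV[OF f]])
  qed
  show ?thesis
    unfolding level_module_def
    by (simp add: indmod_closed indmod_scal_scal indmod_add_scal K) (metis indmod_add_scal_cancel)
qed

theorem lemma3p15:
  fixes k t s :: int and jj :: nat and \<sigma> :: bool
  assumes "k < -2"
  shows "mod_eq (contra (flow s (Dpm \<sigma> k jj t)) (par_pm \<sigma> k jj (t + s)))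
                (flow (- s) (contra (Dpm \<sigma> k jj t) (par_pm \<sigma> k jj t)))
       \<and> mod_eq (contra (flow s (D0 k t)) (par0 k (t + s)))
                (flow (- s) (contra (D0 k t) (par0 k t)))"
proof
  have "fpar k (t + s) par = fpar k s (fpar k t par)" for par
    by (simp add: fpar_def power2_eq_square field_simps)
  then have par_pm_flow: "par_pm \<sigma> k jj (t + s) = fpar k s (par_pm \<sigma> k jj t)"
    and par0_flow: "par0 k (t + s) = fpar k s (par0 k t)"
    unfolding par_pm_def par0_def by simp_all
  show "mod_eq (contra (flow s (Dpm \<sigma> k jj t)) (par_pm \<sigma> k jj (t + s)))
                (flow (- s) (contra (Dpm \<sigma> k jj t) (par_pm \<sigma> k jj t)))"
    unfolding par_pm_flow Dpm_def by (rule contra_flow[OF level_module_flow[OF level_module_indmod]])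
  show "mod_eq (contra (flow s (D0 k t)) (par0 k (t + s)))
                (flow (- s) (contra (D0 k t) (par0 k t)))"
    unfolding par0_flow D0_def by (rule contra_flow[OF level_module_flow[OF level_module_indmod]])
qed

end
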